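(* A connected bipartite graph $H$ is equimatchable if and only if $V(H)$ admits a bipartition into two independent sets $U$ and $W$ such that every vertex of $U$ is strong in $H$.
   Context: A graph is equimatchable if all its maximal (inclusion-wise) matchings have the same size. A vertex $v$ of a graph $H$ is strong if every maximal matching of $H$ covers $v$. *)

theory Defs
  imports Main
begin

definition graph :: "'a set \<Rightarrow> 'a set set \<Rightarrow> bool" where
  "graph V E \<longleftrightarrow> finite V \<and> (\<forall>e\<in>E. \<exists>u v. e = {u, v} \<and> u \<noteq> v \<and> u \<in> V \<and> v \<in> V)"

definition adj :: "'a set set \<Rightarrow> 'a \<Rightarrow> 'a \<Rightarrow> bool" where
  "adj E u v \<longleftrightarrow> {u, v} \<in> E"

definition connected_graph :: "'a set \<Rightarrow> 'a set set \<Rightarrow> bool" where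
  "connected_graph V E \<longleftrightarrow> (\<forall>u\<in>V. \<forall>v\<in>V. (adj E)\<^sup>*\<^sup>* u v)"

definition independent_set :: "'a set set \<Rightarrow> 'a set \<Rightarrow> bool" where
  "independent_set E S \<longleftrightarrow> (\<forall>u\<in>S. \<forall>v\<in>S. \<not> adj E u v)"

definition independent_bipartition :: "'a set \<Rightarrow> 'a set set \<Rightarrow> 'a set \<Rightarrow> 'a set \<Rightarrow> bool" where
  "independent_bipartition V E U W \<longleftrightarrow>
     U \<union> W = V \<and> U \<inter> W = {} \<and> independent_set E U \<and> independent_set E W"

definition bipartite :: "'a set \<Rightarrow> 'a set set \<Rightarrow> bool" where
  "bipartite V E \<longleftrightarrow> (\<exists>U W. independent_bipartition V E U W)"

definition matching :: "'a set set \<Rightarrow> 'a set set \<Rightarrow> bool" where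
  "matching E M \<longleftrightarrow> M \<subseteq> E \<and> (\<forall>e\<in>M. \<forall>f\<in>M. e \<noteq> f \<longrightarrow> e \<inter> f = {})"

definition maximal_matching :: "'a set set \<Rightarrow> 'a set set \<Rightarrow> bool" where
  "maximal_matching E M \<longleftrightarrow> matching E M \<and> (\<forall>M'. matching E M' \<and> M \<subseteq> M' \<longrightarrow> M' = M)"

definition equimatchable :: "'a set set \<Rightarrow> bool" where
  "equimatchable E \<longleftrightarrow>
     (\<forall>M M'. maximal_matching E M \<and> maximal_matching E M' \<longrightarrow> card M = card M')"

definition covers :: "'a set set \<Rightarrow> 'a \<Rightarrow> bool" where
  "covers M v \<longleftrightarrow> (\<exists>e\<in>M. v \<in> e)"

definition strong_vertex :: "'a set set \<Rightarrow> 'a \<Rightarrow> bool" where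
  "strong_vertex E v \<longleftrightarrow> (\<forall>M. maximal_matching E M \<longrightarrow> covers M v)"

end

theory Submission
  imports Defs
begin

text \<open>If every vertex of U is strong, a maximal matching has exactly one edge at each vertex
  of U, so all maximal matchings have |U| edges.

  Conversely, let all maximal matchings have size \<nu>. Then every matching with \<nu> edges is
  maximal, so replacing a matching edge by an edge whose ends become uncovered preserves
  maximality. Suppose a maximal matching M leaves u \<in> U and w \<in> W uncovered, and let
  u, p, p', ..., w be a walk. Re-matching p to u, possibly combined with an exchange at the
  partners q of p and r of p' (M - {pq, p'r} + {pp'} is one edge short of \<nu>, so it has an edge
  with both ends uncovered, and this edge meets q or r), yields a maximal matching leaving p'
  and w uncovered; induction on the length of the walk gives a contradiction. If two maximal
  matchings leave u and w uncovered respectively, exchanges along their difference reduce to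
  the first situation. Hence all of U or all of W consists of strong vertices.\<close>

lemma graph_edgeE:
  assumes "graph V E" "e \<in> E"
  obtains x y where "e = {x, y}" "x \<noteq> y" "x \<in> V" "y \<in> V"
  using assms unfolding graph_def by blast

lemma graph_edge_doubleton: "graph V E \<Longrightarrow> {x, y} \<in> E \<Longrightarrow> x \<noteq> y \<and> x \<in> V \<and> y \<in> V"
  by (erule graph_edgeE) (auto simp: doubleton_eq_iff)

lemma finite_edges: "graph V E \<Longrightarrow> finite E"
proof -
  assume G: "graph V E"
  then have "E \<subseteq> Pow V" by (blast elim: graph_edgeE)
  with G show ?thesis unfolding graph_def by (meson finite_Pow_iff finite_subset)
qed

lemma finite_matching: "graph V E \<Longrightarrow> matching E M \<Longrightarrow> finite M"
  unfolding matching_def by (metis finite_edges finite_subset)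

lemma matching_subset: "matching E M \<Longrightarrow> N \<subseteq> M \<Longrightarrow> matching E N"
  unfolding matching_def by blast

lemma matching_insert:
  assumes "matching E M" "{x, y} \<in> E" "\<not> covers M x" "\<not> covers M y"
  shows "matching E (insert {x, y} M)"
  using assms unfolding matching_def covers_def by blast

lemma covers_insert: "covers (insert {x, y} M) z \<longleftrightarrow> z = x \<or> z = y \<or> covers M z"
  unfolding covers_def by auto

lemma covers_Diff:
  assumes "matching E M" "D \<subseteq> M"
  shows "covers (M - D) z \<longleftrightarrow> covers M z \<and> (\<forall>e\<in>D. z \<notin> e)"
proof
  assume "covers (M - D) z"
  then obtain f where f: "f \<in> M" "f \<notin> D" "z \<in> f" unfolding covers_def by blast
  have "z \<notin> e" if "e \<in> D" for e
    using assms f that unfolding matching_def by (metis disjoint_iff subsetD)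
  with f show "covers M z \<and> (\<forall>e\<in>D. z \<notin> e)" unfolding covers_def by blast
qed (auto simp: covers_def)

lemma covers_Diff_edge:
  "matching E M \<Longrightarrow> {a, b} \<in> M \<Longrightarrow> covers (M - {{a, b}}) z \<longleftrightarrow> covers M z \<and> z \<noteq> a \<and> z \<noteq> b"
  using covers_Diff[of E M "{{a, b}}"] by auto

lemma uncovered_not_in_matching: "\<not> covers M x \<Longrightarrow> {x, y} \<notin> M"
  unfolding covers_def by blast

lemma matching_partner_unique: "matching E M \<Longrightarrow> {a, b} \<in> M \<Longrightarrow> {a, c} \<in> M \<Longrightarrow> b = c"
  unfolding matching_def by (metis doubleton_eq_iff insert_disjoint(1) insertI1)

lemma matching_partnerE:
  assumes "graph V E" "matching E M" "covers M x"
  obtains y where "{x, y} \<in> M"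
proof -
  obtain e where "e \<in> M" "x \<in> e" using assms(3) unfolding covers_def by blast
  moreover from this have "e \<in> E" using assms(2) unfolding matching_def by blast
  ultimately show thesis using that assms(1) by (elim graph_edgeE) (auto simp: insert_commute)
qed

lemma maximal_matching_iff_no_free_edge:
  assumes G: "graph V E" and M: "matching E M"
  shows "maximal_matching E M \<longleftrightarrow> (\<nexists>x y. {x, y} \<in> E \<and> \<not> covers M x \<and> \<not> covers M y)"
proof
  assume max: "maximal_matching E M"
  show "\<nexists>x y. {x, y} \<in> E \<and> \<not> covers M x \<and> \<not> covers M y"
  proof clarify
    fix x y assume xy: "{x, y} \<in> E" and x: "\<not> covers M x" and y: "\<not> covers M y"
    have "insert {x, y} M = M"
      using max matching_insert[OF M xy x y] unfolding maximal_matching_def by blast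
    then have "{x, y} \<in> M" by blast
    with uncovered_not_in_matching[OF x] show False by simp
  qed
next
  assume no_free: "\<nexists>x y. {x, y} \<in> E \<and> \<not> covers M x \<and> \<not> covers M y"
  show "maximal_matching E M" unfolding maximal_matching_def
  proof (intro conjI M allI impI)
    fix M' assume M': "matching E M' \<and> M \<subseteq> M'"
    show "M' = M"
    proof (rule ccontr)
      assume "M' \<noteq> M"
      with M' obtain e where e: "e \<in> M'" "e \<notin> M" by blast
      have "e \<in> E" using M' e(1) unfolding matching_def by blast
      have disj: "e \<inter> f = {}" if "f \<in> M" for f
        using M' e that unfolding matching_def by (metis subsetD)
      obtain x y where xy: "e = {x, y}" using G \<open>e \<in> E\<close> by (elim graph_edgeE)
      have "\<not> covers M x" "\<not> covers M y" using disj xy unfolding covers_def by blast+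
      with no_free \<open>e \<in> E\<close> xy show False by blast
    qed
  qed
qed

lemma matching_extends_to_maximal:
  assumes G: "graph V E" and N: "matching E N"
  obtains M where "maximal_matching E M" "N \<subseteq> M"
proof -
  let ?P = "\<lambda>M. matching E M \<and> N \<subseteq> M"
  have "\<forall>M. ?P M \<longrightarrow> card M < Suc (card E)"
    using finite_edges[OF G] by (metis card_mono le_imp_less_Suc matching_def)
  then obtain M where M: "?P M" "\<forall>M'. ?P M' \<longrightarrow> card M' \<le> card M"
    using ex_has_greatest_nat[of ?P N card "Suc (card E)"] N by blast
  have "maximal_matching E M" unfolding maximal_matching_def
  proof (intro conjI allI impI)
    show "matching E M" using M(1) by blast
    fix M' assume M': "matching E M' \<and> M \<subseteq> M'"
    then have "card M' \<le> card M" using M by blast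
    with M' show "M' = M" using finite_matching[OF G] card_seteq by blast
  qed
  with M that show thesis by blast
qed

lemma independent_bipartition_swap:
  "independent_bipartition V E U W \<Longrightarrow> independent_bipartition V E W U"
  unfolding independent_bipartition_def by blast

lemma independent_bipartition_edge:
  assumes B: "independent_bipartition V E U W" and G: "graph V E"
    and e: "{x, y} \<in> E" and x: "x \<in> U"
  shows "y \<in> W"
proof -
  have UW: "U \<union> W = V" and U: "independent_set E U"
    using B unfolding independent_bipartition_def by simp_all
  have "y \<notin> U" using U e x unfolding independent_set_def adj_def by blast
  moreover have "y \<in> V" using graph_edge_doubleton[OF G e] by simp
  ultimately show ?thesis using UW by blast
qed

lemma independent_bipartition_edge_inter:
  assumes B: "independent_bipartition V E U W" and G: "graph V E" and e: "e \<in> E"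
  shows "\<exists>z. e \<inter> U = {z}"
proof -
  obtain x y where xy: "e = {x, y}" "x \<in> V" using G e by (elim graph_edgeE)
  have UW: "U \<union> W = V" "U \<inter> W = {}"
    using B unfolding independent_bipartition_def by simp_all
  have xy_E: "{x, y} \<in> E" using e xy(1) by simp
  show ?thesis
  proof (cases "x \<in> U")
    case True
    then have "y \<notin> U" using independent_bipartition_edge[OF B G xy_E] UW(2) by blast
    with True have "e \<inter> U = {x}" using xy(1) by auto
    then show ?thesis ..
  next
    case False
    then have "x \<in> W" using xy(2) UW(1) by blast
    then have "y \<in> U"
      using independent_bipartition_edge[OF independent_bipartition_swap[OF B] G xy_E] by blast
    with False have "e \<inter> U = {y}" using xy(1) by auto
    then show ?thesis ..
  qed
qed

lemma card_matching_covering_side: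
  assumes B: "independent_bipartition V E U W" and G: "graph V E"
    and M: "matching E M" and cov: "\<forall>u\<in>U. covers M u"
  shows "card M = card U"
proof -
  define h where "h e = (THE z. e \<inter> U = {z})" for e
  have h: "e \<inter> U = {h e}" if "e \<in> M" for e
  proof -
    have "e \<in> E" using M that unfolding matching_def by blast
    then obtain z where z: "e \<inter> U = {z}"
      using independent_bipartition_edge_inter[OF B G] by blast
    then have "h e = z" unfolding h_def by auto
    with z show ?thesis by simp
  qed
  have "inj_on h M"
  proof (rule inj_onI)
    fix e f assume ef: "e \<in> M" "f \<in> M" "h e = h f"
    with h have "e \<inter> f \<noteq> {}" by blast
    with ef M show "e = f" unfolding matching_def by blast
  qed
  moreover have "h ` M = U"
  proof
    show "h ` M \<subseteq> U" using h by blast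
    show "U \<subseteq> h ` M"
    proof
      fix u assume "u \<in> U"
      with cov obtain e where "e \<in> M" "u \<in> e" unfolding covers_def by blast
      with h \<open>u \<in> U\<close> have "u = h e" by blast
      with \<open>e \<in> M\<close> show "u \<in> h ` M" by blast
    qed
  qed
  ultimately show ?thesis using card_image by fastforce
qed

locale equimatchable_graph =
  fixes V :: "'a set" and E :: "'a set set"
  assumes graph: "graph V E" and equimatchable: "equimatchable E"
begin

definition matching_number :: nat where
  "matching_number = card (SOME M. maximal_matching E M)"

lemma card_maximal_matching: "maximal_matching E M \<Longrightarrow> card M = matching_number"
proof -
  assume M: "maximal_matching E M"
  obtain M0 where "maximal_matching E M0"
    using matching_extends_to_maximal[OF graph, of "{}"] by (auto simp: matching_def)
  then have "maximal_matching E (SOME M. maximal_matching E M)" by (rule someI)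
  with M equimatchable show ?thesis unfolding matching_number_def equimatchable_def by blast
qed

lemma card_matching_le: "matching E M \<Longrightarrow> card M \<le> matching_number"
  by (metis card_maximal_matching card_mono finite_matching graph maximal_matching_def
      matching_extends_to_maximal)

lemma maximal_matching_iff_card:
  "matching E M \<Longrightarrow> maximal_matching E M \<longleftrightarrow> card M = matching_number"
  by (metis card_maximal_matching card_matching_le card_seteq finite_matching graph
      maximal_matching_def)

lemma maximal_matching_no_free_edge:
  "maximal_matching E M \<Longrightarrow> {x, y} \<in> E \<Longrightarrow> covers M x \<or> covers M y"
  using maximal_matching_iff_no_free_edge[OF graph] maximal_matching_def by blast

lemma maximal_matching_exchange:
  assumes M: "maximal_matching E M" and ab: "{a, b} \<in> M" and xy: "{x, y} \<in> E"
    and x: "\<not> covers (M - {{a, b}}) x" and y: "\<not> covers (M - {{a, b}}) y"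
  shows "maximal_matching E (insert {x, y} (M - {{a, b}}))"
proof -
  have Mm: "matching E M" using M maximal_matching_def by blast
  have N: "matching E (insert {x, y} (M - {{a, b}}))"
    using matching_insert[OF matching_subset[OF Mm] xy x y] by blast
  have "{x, y} \<notin> M - {{a, b}}" using uncovered_not_in_matching[OF x] .
  moreover have "finite M" using finite_matching[OF graph Mm] .
  moreover from this ab have "card M > 0" by (auto simp: card_gt_0_iff)
  ultimately have "card (insert {x, y} (M - {{a, b}})) = card M"
    using ab by (simp add: card_Diff_singleton)
  with N M show ?thesis using card_maximal_matching maximal_matching_iff_card by metis
qed

text \<open>Replacing the matching edges at p and p' by the edge p p' gives a matching one edge
  short of maximum; an edge with both ends uncovered by it must meet q or r.\<close>

lemma free_edge_at_partners:
  assumes M: "maximal_matching E M" and pq: "{p, q} \<in> M" and pr: "{p', r} \<in> M"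
    and ne: "{p, q} \<noteq> {p', r}" and pp': "{p, p'} \<in> E"
  shows "{q, r} \<in> E \<or> (\<exists>z. \<not> covers M z \<and> ({q, z} \<in> E \<or> {r, z} \<in> E))"
proof -
  have Mm: "matching E M" using M maximal_matching_def by blast
  define M0 where "M0 = M - {{p, q}, {p', r}}"
  have M0: "matching E M0" unfolding M0_def by (rule matching_subset[OF Mm]) blast
  have cov0: "covers M0 z \<longleftrightarrow> covers M z \<and> z \<notin> {p, q, p', r}" for z
    using covers_Diff[OF Mm, of "{{p, q}, {p', r}}"] pq pr unfolding M0_def by auto
  define M1 where "M1 = insert {p, p'} M0"
  have M1: "matching E M1" unfolding M1_def by (rule matching_insert[OF M0 pp']) (simp_all add: cov0)
  have "card M0 + 2 = card M"
  proof -
    have "card {{p, q}, {p', r}} = 2" using ne by simp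
    moreover have "card {{p, q}, {p', r}} \<le> card M"
      using pq pr finite_matching[OF graph Mm] by (simp add: card_mono)
    ultimately show ?thesis
      using pq pr finite_matching[OF graph Mm] unfolding M0_def by (simp add: card_Diff_subset)
  qed
  moreover have "card M1 = Suc (card M0)"
    unfolding M1_def using finite_matching[OF graph M0] uncovered_not_in_matching[of M0 p p']
    by (simp add: cov0)
  ultimately have "card M1 \<noteq> matching_number" using card_maximal_matching[OF M] by simp
  then obtain x y where xy: "{x, y} \<in> E" "\<not> covers M1 x" "\<not> covers M1 y"
    using maximal_matching_iff_no_free_edge[OF graph M1] maximal_matching_iff_card[OF M1] by blast
  have free1: "z = q \<or> z = r \<or> \<not> covers M z" if "\<not> covers M1 z" for z
    using that unfolding M1_def covers_insert cov0 by blast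
  have "x \<noteq> y" using graph_edge_doubleton[OF graph xy(1)] by blast
  moreover have "covers M x \<or> covers M y" using maximal_matching_no_free_edge[OF M xy(1)] .
  ultimately show ?thesis
    using free1[OF xy(2)] free1[OF xy(3)] xy(1) by (metis insert_commute)
qed

end

locale bipartite_equimatchable = equimatchable_graph +
  fixes U W :: "'a set"
  assumes bipartition: "independent_bipartition V E U W"
begin

lemma edge_U_W: "{x, y} \<in> E \<Longrightarrow> x \<in> U \<Longrightarrow> y \<in> W"
  using independent_bipartition_edge[OF bipartition graph] .

lemma edge_W_U: "{x, y} \<in> E \<Longrightarrow> x \<in> W \<Longrightarrow> y \<in> U"
  using independent_bipartition_edge[OF independent_bipartition_swap[OF bipartition] graph] .

lemma U_W_disjoint: "x \<in> U \<Longrightarrow> x \<notin> W"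
  using bipartition unfolding independent_bipartition_def by blast

lemma uncovered_vertex_shift:
  assumes M: "maximal_matching E M" and u: "u \<in> U" and w: "w \<in> W"
    and fu: "\<not> covers M u" and fw: "\<not> covers M w"
    and up: "{u, p} \<in> E" and pp': "{p, p'} \<in> E" and cp': "covers M p'"
  obtains M' where "maximal_matching E M'" "\<not> covers M' p'" "\<not> covers M' w"
proof -
  have Mm: "matching E M" using M maximal_matching_def by blast
  have cp: "covers M p" using maximal_matching_no_free_edge[OF M up] fu by blast
  obtain q where pq: "{p, q} \<in> M" using matching_partnerE[OF graph Mm cp] .
  obtain r where pr: "{p', r} \<in> M" using matching_partnerE[OF graph Mm cp'] .
  have pqE: "{p, q} \<in> E" and prE: "{p', r} \<in> E" using Mm pq pr unfolding matching_def by blast+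
  have p: "p \<in> W" using edge_U_W[OF up u] .
  have p': "p' \<in> U" using edge_W_U[OF pp' p] .
  have q: "q \<in> U" using edge_W_U[OF pqE p] .
  have r: "r \<in> W" using edge_U_W[OF prE p'] .
  have cq: "covers M q" and cr: "covers M r" using pq pr unfolding covers_def by blast+
  have sides: "p \<noteq> p'" "p \<noteq> q" "q \<noteq> w" "u \<noteq> w" "p' \<noteq> r" "p' \<noteq> w"
    using p p' q r u w U_W_disjoint by blast+
  define Mu where "Mu = insert {u, p} (M - {{p, q}})"
  have Mu: "maximal_matching E Mu" unfolding Mu_def
    by (rule maximal_matching_exchange[OF M pq up]) (simp_all add: covers_Diff_edge[OF Mm pq] fu)
  have covMu: "covers Mu z \<longleftrightarrow> z = u \<or> z = p \<or> (covers M z \<and> z \<noteq> q)" for z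
    unfolding Mu_def covers_insert covers_Diff_edge[OF Mm pq] by blast
  show thesis
  proof (cases "q = p'")
    case True
    have "\<not> covers Mu p'" "\<not> covers Mu w"
      using covMu True sides fu cp' fw cp by metis+
    with Mu that show thesis by blast
  next
    case False
    have ne: "{p, q} \<noteq> {p', r}" using False sides by (auto simp: doubleton_eq_iff)
    from free_edge_at_partners[OF M pq pr ne pp'] consider
      "{q, r} \<in> E" | z where "\<not> covers M z" "{q, z} \<in> E" | z where "\<not> covers M z" "{r, z} \<in> E"
      by blast
    then show thesis
    proof cases
      case 1
      have prMu: "{p', r} \<in> Mu" using pr ne unfolding Mu_def by auto
      have Mum: "matching E Mu" using Mu maximal_matching_def by blast
      have cov: "covers (Mu - {{p', r}}) z \<longleftrightarrow> covers Mu z \<and> z \<noteq> p' \<and> z \<noteq> r" for z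
        using covers_Diff_edge[OF Mum prMu] .
      have "q \<noteq> u" using cq fu by blast
      then have "maximal_matching E (insert {q, r} (Mu - {{p', r}}))"
        using maximal_matching_exchange[OF Mu prMu 1] cov covMu sides by simp
      moreover have "\<not> covers (insert {q, r} (Mu - {{p', r}})) p'"
        using False sides by (simp add: covers_insert cov)
      moreover have "\<not> covers (insert {q, r} (Mu - {{p', r}})) w"
        using sides cr fw cp covMu by (auto simp: covers_insert cov)
      ultimately show thesis using that by blast
    next
      case (2 z)
      have "z \<in> W" using edge_U_W[OF 2(2) q] .
      then have "\<not> covers Mu z" "\<not> covers Mu q"
        using covMu 2(1) u U_W_disjoint cp cq fu sides by metis+
      with maximal_matching_no_free_edge[OF Mu 2(2)] show thesis by blast
    next
      case (3 z)
      have "z \<in> U" using edge_W_U[OF 3(2) r] .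
      have "maximal_matching E (insert {r, z} (M - {{p', r}}))"
        using maximal_matching_exchange[OF M pr 3(2)] 3(1) by (simp add: covers_Diff_edge[OF Mm pr])
      moreover have "\<not> covers (insert {r, z} (M - {{p', r}})) p'"
        using sides cp' 3(1) by (auto simp: covers_insert covers_Diff_edge[OF Mm pr])
      moreover have "\<not> covers (insert {r, z} (M - {{p', r}})) w"
        using \<open>z \<in> U\<close> w U_W_disjoint cr fw
        by (auto simp: covers_insert covers_Diff_edge[OF Mm pr])
      ultimately show thesis using that by blast
    qed
  qed
qed

lemma maximal_matching_covers_walk_end:
  assumes "(adj E ^^ n) u w" "maximal_matching E M" "u \<in> U" "w \<in> W"
  shows "covers M u \<or> covers M w"
  using assms
proof (induction n arbitrary: M u rule: less_induct)
  case (less n)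
  note walk = less.prems(1) and M = less.prems(2) and u = less.prems(3) and w = less.prems(4)
  show ?case
  proof (rule ccontr)
    assume "\<not> ?case"
    then have fu: "\<not> covers M u" and fw: "\<not> covers M w" by blast+
    consider "n = 0" | "n = Suc 0" | k where "n = Suc (Suc k)"
      by (metis not0_implies_Suc)
    then show False
    proof cases
      case 1
      then have "u = w" using walk by simp
      with u w U_W_disjoint show False by blast
    next
      case 2
      then have "{u, w} \<in> E" using walk by (simp add: adj_def eq_OO)
      with maximal_matching_no_free_edge[OF M] fu fw show False by blast
    next
      case (3 k)
      obtain p where up: "adj E u p" and pw: "(adj E ^^ Suc k) p w"
        using relpowp_Suc_D2[of "Suc k" "adj E" u w] walk 3 by blast
      obtain p' where pp': "adj E p p'" and p'w: "(adj E ^^ k) p' w"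
        using relpowp_Suc_D2[OF pw] by blast
      have p': "p' \<in> U"
        using up pp' edge_W_U edge_U_W u unfolding adj_def by blast
      have "k < n" using 3 by simp
      have "covers M p'" using less.IH[OF \<open>k < n\<close> p'w M p' w] fw by blast
      then obtain M' where M': "maximal_matching E M'" "\<not> covers M' p'" "\<not> covers M' w"
        using uncovered_vertex_shift[OF M u w fu fw] up pp' unfolding adj_def by blast
      from less.IH[OF \<open>k < n\<close> p'w M'(1) p' w] M'(2,3) show False by blast
    qed
  qed
qed

text \<open>Exchanging along M1 - M2 moves the uncovered vertex of W until M1 leaves it
  uncovered as well.\<close>

lemma maximal_matchings_cover_side:
  assumes C: "connected_graph V E" and M1: "maximal_matching E M1" and M2: "maximal_matching E M2"
    and u: "u \<in> U" and w: "w \<in> W"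
  shows "covers M1 u \<or> covers M2 w"
  using M2 w
proof (induction M2 arbitrary: w rule: measure_induct_rule[where f = "\<lambda>M2. card (M1 - M2)"])
  case (less M2 w)
  have M1m: "matching E M1" and M2m: "matching E M2"
    using M1 less.prems(1) maximal_matching_def by blast+
  show ?case
  proof (rule ccontr)
    assume "\<not> ?case"
    then have fu: "\<not> covers M1 u" and fw: "\<not> covers M2 w" by blast+
    show False
    proof (cases "covers M1 w")
      case False
      have "u \<in> V" "w \<in> V" using u less.prems(2) bipartition
        unfolding independent_bipartition_def by blast+
      then have "(adj E)\<^sup>*\<^sup>* u w" using C unfolding connected_graph_def by blast
      then obtain n where "(adj E ^^ n) u w" by (metis rtranclp_power)
      with maximal_matching_covers_walk_end M1 u less.prems(2) fu False show False by blast
    next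
      case True
      obtain a where wa: "{w, a} \<in> M1" using matching_partnerE[OF graph M1m True] .
      have waE: "{w, a} \<in> E" using M1m wa unfolding matching_def by blast
      have a: "a \<in> U" using edge_W_U[OF waE less.prems(2)] .
      have "covers M2 a" using maximal_matching_no_free_edge[OF less.prems(1) waE] fw by blast
      then obtain c where ac: "{a, c} \<in> M2" using matching_partnerE[OF graph M2m] by blast
      have acE: "{a, c} \<in> E" using M2m ac unfolding matching_def by blast
      have c: "c \<in> W" using edge_U_W[OF acE a] .
      have cw: "c \<noteq> w" using ac fw unfolding covers_def by blast
      define N where "N = insert {w, a} (M2 - {{a, c}})"
      have N: "maximal_matching E N" unfolding N_def
        by (rule maximal_matching_exchange[OF less.prems(1) ac waE])
          (simp_all add: covers_Diff_edge[OF M2m ac] fw)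
      have fc: "\<not> covers N c"
        using cw a c U_W_disjoint by (auto simp: N_def covers_insert covers_Diff_edge[OF M2m ac])
      have "{a, c} \<notin> M1"
        using matching_partner_unique[OF M1m, of a w c] wa cw by (metis insert_commute)
      then have "M1 - N \<subset> M1 - M2"
        using wa uncovered_not_in_matching[OF fw] unfolding N_def by blast
      then have "card (M1 - N) < card (M1 - M2)"
        using finite_matching[OF graph M1m] by (simp add: psubset_card_mono)
      with less.IH N c fu fc show False by blast
    qed
  qed
qed

lemma strong_side:
  assumes "connected_graph V E"
  shows "(\<forall>u\<in>U. strong_vertex E u) \<or> (\<forall>w\<in>W. strong_vertex E w)"
  using maximal_matchings_cover_side[OF assms] unfolding strong_vertex_def by blast

end

theorem mainTheorem13:
  fixes V :: "'a set" and E :: "'a set set"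
  assumes "graph V E" and "connected_graph V E" and "bipartite V E"
  shows "equimatchable E \<longleftrightarrow>
           (\<exists>U W. independent_bipartition V E U W \<and> (\<forall>u\<in>U. strong_vertex E u))"
proof
  assume "equimatchable E"
  obtain U W where B: "independent_bipartition V E U W"
    using assms(3) unfolding bipartite_def by blast
  interpret bipartite_equimatchable V E U W
    using assms(1) \<open>equimatchable E\<close> B by unfold_locales
  from strong_side[OF assms(2)] B independent_bipartition_swap[OF B]
  show "\<exists>U W. independent_bipartition V E U W \<and> (\<forall>u\<in>U. strong_vertex E u)" by blast
next
  assume "\<exists>U W. independent_bipartition V E U W \<and> (\<forall>u\<in>U. strong_vertex E u)"
  then obtain U W where B: "independent_bipartition V E U W"
    and strong: "\<forall>u\<in>U. strong_vertex E u" by blast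
  have "card M = card U" if "maximal_matching E M" for M
    using card_matching_covering_side[OF B assms(1)] that strong
    unfolding strong_vertex_def maximal_matching_def by blast
  then show "equimatchable E" unfolding equimatchable_def by simp
qed

end
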